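(* In the setting of the context, let $\ell\in L$, $G_d=(U_d\mid T_d\mid F_d)$ (the matrix $M^{\Delta,H}_d$ with block $R_d$ removed) and $G_{d,I(\ell)}$ its submatrix of rows indexed by $I(\ell)$. Then $$H_d(\ell)=\Big\{[z]\in H_d\ \Big|\ z\in Z_d \text{ has } z^\Delta=U_d\upsilon+T_d\tau+F_d\varphi \text{ with } \begin{pmatrix}\upsilon\\\tau\\\varphi\end{pmatrix}\in\ker G_{d,I(\ell)}\Big\},$$ where, under the isomorphism $H_d\cong\bigoplus_{i=1}^{n_T}\mathbb{D}/(a^d_i)\oplus\mathbb{D}^{n_F}$, such a class $[z]$ has coordinates $(\pi^d(\tau),\varphi)$, $\pi^d$ being the componentwise projections $\mathbb{D}\to\mathbb{D}/(a^d_i)$.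
   Context: $(L,\leq)$ is a CDL (poset with all joins and meets, distributing over each other; least element $0$). $\Delta$ is a finite simplicial complex, $\mathbb{D}$ a PID, $\mu:\Delta\to L$ an $L$-fuzzy subcomplex ($\mu(\sigma_1)\geq\mu(\sigma_2)$ whenever $\sigma_1$ is a face of $\sigma_2$). $\sigma^d_1,\dots,\sigma^d_{n_d}$ are the positively oriented $d$-simplices, $C_d$ the free $\mathbb{D}$-module on them, $c^\Delta$ the coordinate vector; $Z_d=\ker\partial_d$, $B_d=\operatorname{im}\partial_{d+1}$, $H_d=Z_d/B_d$. Reduced bases: fix bases $E^H_d$ of $C_d$ with change-of-basis matrices $M^{\Delta,H}_d$ (columns = simplex-coordinates of elements of $E^H_d$) such that the matrix $D_d$ of $\partial_d$ w.r.t. $E^H_d,E^H_{d-1}$ has the form $(0_{n_{d-1}\times r_{d+1}}\mid D'_d)$, $r_{d+1}=\operatorname{rank}\partial_{d+1}$, the only nonzero entries of $D'_d$ being its first $r_d$ diagonal entries, successively dividing. Elements of $E^H_d$ are of type U (column in $D_d$ zero, row in $D_{d+1}$ has a unit entry), T (column zero, row has a nonzero non-unit entry), R (column nonzero) or F (column zero, row zero), ordered U,T,R,F; $M^{\Delta,H}_d=(U_d\mid T_d\mid R_d\mid F_d)$ with $n_U,n_T,n_R,n_F$ columns; $a^d_1,\dots,a^d_{n_T}$ are the nonzero row entries of the T generators and $A_d=\operatorname{diag}(a^d_i)$. Then $Z_d$ consists of the chains with coordinates $U_d\upsilon+T_d\tau+F_d\varphi$, $B_d$ of those with coordinates $U_d\upsilon+T_dA_d\tau$,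 and $[z]\mapsto(\pi^d(\tau),\varphi)$ is an isomorphism $H_d\cong\bigoplus_i\mathbb{D}/(a^d_i)\oplus\mathbb{D}^{n_F}$. Constraint system: $S(c,I)$ is $(U_d\mid T_dA_d)_I\binom{\upsilon}{\tau}=-c^\Delta_I$ in unknowns $\upsilon\in\mathbb{D}^{n_U},\tau\in\mathbb{D}^{n_T}$ (rows indexed by $I$). $I(\ell)=\{i\mid\mu(\sigma^d_i)\not\geq\ell\}$. $H_d(\ell)=\{[h]\in H_d\mid S(h,I(\ell))\text{ solvable}\}$ (independent of the representative $h\in Z_d$). *)

theory Defs
  imports "Jordan_Normal_Form.Matrix_Kernel" "Jordan_Normal_Form.DL_Submatrix"
begin

definition is_ideal :: "'a::comm_ring_1 set \<Rightarrow> bool" where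
  "is_ideal I \<longleftrightarrow> 0 \<in> I \<and> (\<forall>x\<in>I. \<forall>y\<in>I. x + y \<in> I) \<and> (\<forall>x\<in>I. \<forall>r. r * x \<in> I)"

definition is_PID :: "'a::idom itself \<Rightarrow> bool" where
  "is_PID T \<longleftrightarrow> (\<forall>I::'a set. is_ideal I \<longrightarrow> (\<exists>a. I = {a * x | x. True}))"

definition residue :: "'a::comm_ring_1 \<Rightarrow> 'a \<Rightarrow> 'a set" where
  "residue a t = {t + a * x | x. True}"

definition simplicial_complex :: "'v set set \<Rightarrow> bool" where
  "simplicial_complex K \<longleftrightarrow> finite K \<and> (\<forall>\<sigma>\<in>K. finite \<sigma> \<and> \<sigma> \<noteq> {}) \<and>
     (\<forall>\<sigma>\<in>K. \<forall>\<tau>. \<tau> \<subseteq> \<sigma> \<and> \<tau> \<noteq> {} \<longrightarrow> \<tau> \<in> K)"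

definition simplices :: "'v set set \<Rightarrow> nat \<Rightarrow> 'v set set" where
  "simplices K d = {\<sigma>\<in>K. card \<sigma> = Suc d}"

definition fuzzy_subcomplex :: "'v set set \<Rightarrow> ('v set \<Rightarrow> 'l::order) \<Rightarrow> bool" where
  "fuzzy_subcomplex K \<mu> \<longleftrightarrow> (\<forall>\<sigma>1\<in>K. \<forall>\<sigma>2\<in>K. \<sigma>1 \<subseteq> \<sigma>2 \<longrightarrow> \<mu> \<sigma>2 \<le> \<mu> \<sigma>1)"

text \<open>sl d is the enumeration sigma^d_1, ..., sigma^d_{n_d} (0-based here) of the d-simplices.\<close>
definition enumeration :: "'v set set \<Rightarrow> (nat \<Rightarrow> 'v set list) \<Rightarrow> bool" where
  "enumeration K sl \<longleftrightarrow> (\<forall>d. distinct (sl d) \<and> set (sl d) = simplices K d)"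

abbreviation nsimp :: "(nat \<Rightarrow> 'v set list) \<Rightarrow> nat \<Rightarrow> nat" where
  "nsimp sl d \<equiv> length (sl d)"

section \<open>Boundary matrices (positive orientation = increasing vertex order)\<close>

definition bdry_coeff :: "'v::linorder set \<Rightarrow> 'v set \<Rightarrow> 'a::comm_ring_1" where
  "bdry_coeff \<tau> \<sigma> = (\<Sum>k<card \<sigma>. if \<tau> = \<sigma> - {sorted_list_of_set \<sigma> ! k} then (-1) ^ k else 0)"

definition bdry_mat :: "(nat \<Rightarrow> 'v::linorder set list) \<Rightarrow> nat \<Rightarrow> 'a::comm_ring_1 mat" where
  "bdry_mat sl d = (if d = 0 then 0\<^sub>m 0 (nsimp sl 0)
     else mat (nsimp sl (d - 1)) (nsimp sl d) (\<lambda>(i, j). bdry_coeff (sl (d - 1) ! i) (sl d ! j)))"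

text \<open>Matrix D_d of partial_d w.r.t. the bases E^H_d, E^H_{d-1} (columns of M d).\<close>
definition red_mat :: "(nat \<Rightarrow> 'v::linorder set list) \<Rightarrow> (nat \<Rightarrow> 'a::comm_ring_1 mat) \<Rightarrow> nat \<Rightarrow> 'a mat" where
  "red_mat sl M d = (if d = 0 then 0\<^sub>m 0 (nsimp sl 0)
     else (SOME D. D \<in> carrier_mat (nsimp sl (d - 1)) (nsimp sl d) \<and> M (d - 1) * D = bdry_mat sl d * M d))"

text \<open>Reduced bases: M d is an invertible change of basis and D_d = (0_{r_{d+1}} | D'_d), the only
  nonzero entries of D'_d being its first r_d diagonal entries, successively dividing.
  (These conditions force r_d = rank partial_d.)\<close>
definition reduced_bases :: "(nat \<Rightarrow> 'v::linorder set list) \<Rightarrow> (nat \<Rightarrow> 'a::comm_ring_1 mat) \<Rightarrow> bool" where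
  "reduced_bases sl M \<longleftrightarrow>
     (\<forall>d. M d \<in> carrier_mat (nsimp sl d) (nsimp sl d) \<and> invertible_mat (M d)) \<and>
     (\<exists>r :: nat \<Rightarrow> nat. \<forall>d.
        r (Suc d) + r d \<le> nsimp sl d \<and> r d \<le> dim_row (red_mat sl M d) \<and>
        (\<forall>i < dim_row (red_mat sl M d). \<forall>j < dim_col (red_mat sl M d).
           red_mat sl M d $$ (i, j) \<noteq> 0 \<longleftrightarrow> (i < r d \<and> j = r (Suc d) + i)) \<and>
        (\<forall>i. Suc i < r d \<longrightarrow>
           red_mat sl M d $$ (i, r (Suc d) + i) dvd red_mat sl M d $$ (Suc i, r (Suc d) + Suc i)))"

definition col_zero :: "(nat \<Rightarrow> 'v::linorder set list) \<Rightarrow> (nat \<Rightarrow> 'a::comm_ring_1 mat) \<Rightarrow> nat \<Rightarrow> nat \<Rightarrow> bool" where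
  "col_zero sl M d j \<longleftrightarrow> (\<forall>i < dim_row (red_mat sl M d). red_mat sl M d $$ (i, j) = 0)"

definition row_entries :: "(nat \<Rightarrow> 'v::linorder set list) \<Rightarrow> (nat \<Rightarrow> 'a::comm_ring_1 mat) \<Rightarrow> nat \<Rightarrow> nat \<Rightarrow> 'a set" where
  "row_entries sl M d j = {red_mat sl M (Suc d) $$ (j, k) | k. k < dim_col (red_mat sl M (Suc d))}"

definition typeU :: "(nat \<Rightarrow> 'v::linorder set list) \<Rightarrow> (nat \<Rightarrow> 'a::comm_ring_1 mat) \<Rightarrow> nat \<Rightarrow> nat \<Rightarrow> bool" where
  "typeU sl M d j \<longleftrightarrow> col_zero sl M d j \<and> (\<exists>x\<in>row_entries sl M d j. x dvd 1)"

definition typeT :: "(nat \<Rightarrow> 'v::linorder set list) \<Rightarrow> (nat \<Rightarrow> 'a::comm_ring_1 mat) \<Rightarrow> nat \<Rightarrow> nat \<Rightarrow> bool" where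
  "typeT sl M d j \<longleftrightarrow> col_zero sl M d j \<and> (\<exists>x\<in>row_entries sl M d j. x \<noteq> 0 \<and> \<not> x dvd 1)"

definition typeR :: "(nat \<Rightarrow> 'v::linorder set list) \<Rightarrow> (nat \<Rightarrow> 'a::comm_ring_1 mat) \<Rightarrow> nat \<Rightarrow> nat \<Rightarrow> bool" where
  "typeR sl M d j \<longleftrightarrow> \<not> col_zero sl M d j"

definition typeF :: "(nat \<Rightarrow> 'v::linorder set list) \<Rightarrow> (nat \<Rightarrow> 'a::comm_ring_1 mat) \<Rightarrow> nat \<Rightarrow> nat \<Rightarrow> bool" where
  "typeF sl M d j \<longleftrightarrow> col_zero sl M d j \<and> (\<forall>x\<in>row_entries sl M d j. x = 0)"

definition nU :: "(nat \<Rightarrow> 'v::linorder set list) \<Rightarrow> (nat \<Rightarrow> 'a::comm_ring_1 mat) \<Rightarrow> nat \<Rightarrow> nat" where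
  "nU sl M d = card {j. j < nsimp sl d \<and> typeU sl M d j}"
definition nT :: "(nat \<Rightarrow> 'v::linorder set list) \<Rightarrow> (nat \<Rightarrow> 'a::comm_ring_1 mat) \<Rightarrow> nat \<Rightarrow> nat" where
  "nT sl M d = card {j. j < nsimp sl d \<and> typeT sl M d j}"
definition nR :: "(nat \<Rightarrow> 'v::linorder set list) \<Rightarrow> (nat \<Rightarrow> 'a::comm_ring_1 mat) \<Rightarrow> nat \<Rightarrow> nat" where
  "nR sl M d = card {j. j < nsimp sl d \<and> typeR sl M d j}"
definition nF :: "(nat \<Rightarrow> 'v::linorder set list) \<Rightarrow> (nat \<Rightarrow> 'a::comm_ring_1 mat) \<Rightarrow> nat \<Rightarrow> nat" where
  "nF sl M d = card {j. j < nsimp sl d \<and> typeF sl M d j}"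

text \<open>Column blocks of M_d = (U_d | T_d | R_d | F_d) (basis ordered U, T, R, F).\<close>
definition col_block :: "'a mat \<Rightarrow> nat \<Rightarrow> nat \<Rightarrow> 'a mat" where
  "col_block A off k = mat (dim_row A) k (\<lambda>(i, j). A $$ (i, off + j))"

definition Ublk where "Ublk sl M d = col_block (M d) 0 (nU sl M d)"
definition Tblk where "Tblk sl M d = col_block (M d) (nU sl M d) (nT sl M d)"
definition Rblk where "Rblk sl M d = col_block (M d) (nU sl M d + nT sl M d) (nR sl M d)"
definition Fblk where "Fblk sl M d = col_block (M d) (nU sl M d + nT sl M d + nR sl M d) (nF sl M d)"

definition Gmat :: "(nat \<Rightarrow> 'v::linorder set list) \<Rightarrow> (nat \<Rightarrow> 'a::comm_ring_1 mat) \<Rightarrow> nat \<Rightarrow> 'a mat" where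
  "Gmat sl M d = mat (nsimp sl d) (nU sl M d + nT sl M d + nF sl M d)
     (\<lambda>(i, j). if j < nU sl M d + nT sl M d then M d $$ (i, j) else M d $$ (i, j + nR sl M d))"

definition tors_coeff :: "(nat \<Rightarrow> 'v::linorder set list) \<Rightarrow> (nat \<Rightarrow> 'a::comm_ring_1 mat) \<Rightarrow> nat \<Rightarrow> nat \<Rightarrow> 'a" where
  "tors_coeff sl M d i = (SOME x. x \<in> row_entries sl M d (nU sl M d + i) \<and> x \<noteq> 0)"

definition Amat :: "(nat \<Rightarrow> 'v::linorder set list) \<Rightarrow> (nat \<Rightarrow> 'a::comm_ring_1 mat) \<Rightarrow> nat \<Rightarrow> 'a mat" where
  "Amat sl M d = mat (nT sl M d) (nT sl M d) (\<lambda>(i, j). if i = j then tors_coeff sl M d i else 0)"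

section \<open>Cycles, boundaries, homology (chains identified with their coordinate vectors)\<close>

definition cycles :: "(nat \<Rightarrow> 'v::linorder set list) \<Rightarrow> nat \<Rightarrow> 'a::comm_ring_1 vec set" where
  "cycles sl d = {z \<in> carrier_vec (nsimp sl d). bdry_mat sl d *\<^sub>v z = 0\<^sub>v (dim_row (bdry_mat sl d :: 'a mat))}"

definition boundaries :: "(nat \<Rightarrow> 'v::linorder set list) \<Rightarrow> nat \<Rightarrow> 'a::comm_ring_1 vec set" where
  "boundaries sl d = {bdry_mat sl (Suc d) *\<^sub>v c | c. c \<in> carrier_vec (nsimp sl (Suc d))}"

definition hclass :: "(nat \<Rightarrow> 'v::linorder set list) \<Rightarrow> nat \<Rightarrow> 'a::comm_ring_1 vec \<Rightarrow> 'a vec set" where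
  "hclass sl d z = {z + b | b. b \<in> boundaries sl d}"

definition homology :: "(nat \<Rightarrow> 'v::linorder set list) \<Rightarrow> nat \<Rightarrow> 'a::comm_ring_1 vec set set" where
  "homology sl d = hclass sl d ` cycles sl d"

definition Iset :: "(nat \<Rightarrow> 'v set list) \<Rightarrow> ('v set \<Rightarrow> 'l::order) \<Rightarrow> nat \<Rightarrow> 'l \<Rightarrow> nat set" where
  "Iset sl \<mu> d l = {i. i < nsimp sl d \<and> \<not> (\<mu> (sl d ! i) \<ge> l)}"

definition S_solvable :: "(nat \<Rightarrow> 'v::linorder set list) \<Rightarrow> (nat \<Rightarrow> 'a::comm_ring_1 mat) \<Rightarrow> nat \<Rightarrow> 'a vec \<Rightarrow> nat set \<Rightarrow> bool" where
  "S_solvable sl M d c I \<longleftrightarrow>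
     (\<exists>\<upsilon> \<in> carrier_vec (nU sl M d). \<exists>\<tau> \<in> carrier_vec (nT sl M d).
        \<forall>i\<in>I. (Ublk sl M d *\<^sub>v \<upsilon> + Tblk sl M d *\<^sub>v (Amat sl M d *\<^sub>v \<tau>)) $ i = - (c $ i))"

definition Hlevel :: "(nat \<Rightarrow> 'v::linorder set list) \<Rightarrow> (nat \<Rightarrow> 'a::comm_ring_1 mat) \<Rightarrow> ('v set \<Rightarrow> 'l::order)
    \<Rightarrow> nat \<Rightarrow> 'l \<Rightarrow> 'a vec set set" where
  "Hlevel sl M \<mu> d l = {X \<in> homology sl d. \<exists>h \<in> cycles sl d. X = hclass sl d h \<and> S_solvable sl M d h (Iset sl \<mu> d l)}"

definition hom_iso :: "(nat \<Rightarrow> 'v::linorder set list) \<Rightarrow> (nat \<Rightarrow> 'a::comm_ring_1 mat) \<Rightarrow> nat \<Rightarrow> 'a vec \<Rightarrow> 'a set vec \<times> 'a vec" where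
  "hom_iso sl M d z = (let c = (SOME c. c \<in> carrier_vec (nsimp sl d) \<and> M d *\<^sub>v c = z) in
     (vec (nT sl M d) (\<lambda>i. residue (tors_coeff sl M d i) (c $ (nU sl M d + i))),
      vec (nF sl M d) (\<lambda>i. c $ (nU sl M d + nT sl M d + nR sl M d + i))))"

end

theory Submission
  imports Defs
begin

text \<open>
  Write a chain as M_d c, where c = (\<upsilon>, \<tau>, \<rho>, \<phi>) are its coordinates with respect to the
  reduced basis E^H_d, split into the U, T, R and F blocks. Since D_d is nonzero only on the
  diagonal of its R block and M_{d-1} is invertible, the chain is a cycle iff \<rho> = 0. Since
  D_{d+1} is nonzero only on a diagonal of successively dividing entries (units against the
  U block, the a^d_i against the T block), every chain U_d \<upsilon> + T_d A_d \<tau> is a boundary.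
  Hence if (\<upsilon>, \<tau>) solves S(h, I(l)), the homologous cycle h + U_d \<upsilon> + T_d A_d \<tau> vanishes on
  I(l); writing it as U_d \<upsilon>' + T_d \<tau>' + F_d \<phi>' = G_d (\<upsilon>'; \<tau>'; \<phi>'), this says that
  (\<upsilon>'; \<tau>'; \<phi>') lies in the kernel of G_{d,I(l)}. Conversely, a cycle vanishing on I(l)
  solves its own system with \<upsilon> = \<tau> = 0. The image of such a class under the isomorphism is
  read off from the coordinates (\<upsilon>', \<tau>', 0, \<phi>').
\<close>

section \<open>Matrix-vector products\<close>

lemma invertible_mat_inverse_carrier:
  fixes A :: "'a::semiring_1 mat"
  assumes "A \<in> carrier_mat n n" "invertible_mat A"
  obtains B where "B \<in> carrier_mat n n" "A * B = 1\<^sub>m n" "B * A = 1\<^sub>m n"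
proof -
  from assms obtain B where B: "A * B = 1\<^sub>m (dim_row A)" "B * A = 1\<^sub>m (dim_row B)"
    unfolding invertible_mat_def inverts_mat_def by blast
  have "B \<in> carrier_mat n n"
    using B assms(1) by (metis carrier_matD carrier_matI index_mult_mat(3) index_one_mat(3))
  then show ?thesis using B assms(1) that by auto
qed

lemma invertible_mat_mult_vec_inj:
  fixes A :: "'a::semiring_1 mat"
  assumes "A \<in> carrier_mat n n" "invertible_mat A" "x \<in> carrier_vec n" "y \<in> carrier_vec n"
    and "A *\<^sub>v x = A *\<^sub>v y"
  shows "x = y"
proof -
  obtain B where B: "B \<in> carrier_mat n n" "B * A = 1\<^sub>m n"
    using invertible_mat_inverse_carrier[OF assms(1,2)] by blast
  have "x = B *\<^sub>v (A *\<^sub>v x)" using B assms by (metis assoc_mult_mat_vec one_mult_mat_vec)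
  also have "\<dots> = y" using B assms by (metis assoc_mult_mat_vec one_mult_mat_vec)
  finally show ?thesis .
qed

lemma invertible_mat_mult_vec_surj:
  fixes A :: "'a::semiring_1 mat"
  assumes "A \<in> carrier_mat n n" "invertible_mat A" "z \<in> carrier_vec n"
  obtains c where "c \<in> carrier_vec n" "A *\<^sub>v c = z"
proof -
  obtain B where B: "B \<in> carrier_mat n n" "A * B = 1\<^sub>m n"
    using invertible_mat_inverse_carrier[OF assms(1,2)] by blast
  have "A *\<^sub>v (B *\<^sub>v z) = z" using B assms by (metis assoc_mult_mat_vec one_mult_mat_vec)
  then show ?thesis using that[of "B *\<^sub>v z"] B assms(3) by simp
qed

lemma mult_mat_vec_zero [simp]:
  fixes A :: "'a::semiring_0 mat"
  shows "A *\<^sub>v 0\<^sub>v (dim_col A) = 0\<^sub>v (dim_row A)"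
  by (intro eq_vecI) auto

lemma mult_vec_index_shifted_diagonal:
  fixes X :: "'a::semiring_0 mat"
  assumes "X \<in> carrier_mat nr nc" "c \<in> carrier_vec nc" "i < nr"
    and "\<And>j. j < nc \<Longrightarrow> j \<noteq> off + i \<Longrightarrow> X $$ (i, j) = 0"
  shows "(X *\<^sub>v c) $ i = (if off + i < nc then X $$ (i, off + i) * c $ (off + i) else 0)"
proof -
  have "(X *\<^sub>v c) $ i = (\<Sum>j\<in>{0..<nc}. X $$ (i, j) * c $ j)"
    using assms by (simp add: scalar_prod_def)
  also have "\<dots> = (\<Sum>j\<in>{0..<nc} \<inter> {off + i}. X $$ (i, j) * c $ j)"
    using assms(4) by (intro sum.mono_neutral_right) auto
  finally show ?thesis by (simp split: if_splits)
qed

lemma mult_vec_shifted_diagonal_eq_zero_iff: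
  fixes X :: "'a::idom mat"
  assumes X: "X \<in> carrier_mat nr nc" and c: "c \<in> carrier_vec nc"
    and bounds: "q \<le> nr" "off + q \<le> nc"
    and nonzero: "\<And>i j. i < nr \<Longrightarrow> j < nc \<Longrightarrow> X $$ (i, j) \<noteq> 0 \<longleftrightarrow> i < q \<and> j = off + i"
  shows "X *\<^sub>v c = 0\<^sub>v nr \<longleftrightarrow> (\<forall>i<q. c $ (off + i) = 0)"
proof -
  have "(X *\<^sub>v c) $ i = (if i < q then X $$ (i, off + i) * c $ (off + i) else 0)" if "i < nr" for i
    using mult_vec_index_shifted_diagonal[OF X c that, of off] nonzero[OF that] bounds
    by (cases "off + i < nc") auto
  moreover have "X $$ (i, off + i) \<noteq> 0" if "i < q" for i
    using nonzero[of i "off + i"] bounds that by auto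
  ultimately show ?thesis
    using X bounds by (auto simp: vec_eq_iff)
qed

lemma col_block_all: "col_block A 0 (dim_col A) = A"
  unfolding col_block_def by (intro eq_matI) auto

lemma col_block_mult_vec_carrier [simp]: "col_block A off k *\<^sub>v v \<in> carrier_vec (dim_row A)"
  unfolding col_block_def by (intro carrier_vecI) simp

lemma col_block_mult_zero: "col_block A off k *\<^sub>v 0\<^sub>v k = 0\<^sub>v (dim_row A)"
  using mult_mat_vec_zero[of "col_block A off k"] by (simp add: col_block_def)

lemma col_block_mult_append:
  fixes A :: "'a::comm_semiring_0 mat"
  assumes "v \<in> carrier_vec k1" "w \<in> carrier_vec k2"
  shows "col_block A off (k1 + k2) *\<^sub>v (v @\<^sub>v w) =
    col_block A off k1 *\<^sub>v v + col_block A (off + k1) k2 *\<^sub>v w"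
proof (rule eq_vecI)
  fix i assume "i < dim_vec (col_block A off k1 *\<^sub>v v + col_block A (off + k1) k2 *\<^sub>v w)"
  then have i: "i < dim_row A" by (simp add: col_block_def)
  have "row (col_block A off (k1 + k2)) i =
      row (col_block A off k1) i @\<^sub>v row (col_block A (off + k1) k2) i"
    using i by (intro eq_vecI) (auto simp: col_block_def add.assoc)
  then show "(col_block A off (k1 + k2) *\<^sub>v (v @\<^sub>v w)) $ i =
      (col_block A off k1 *\<^sub>v v + col_block A (off + k1) k2 *\<^sub>v w) $ i"
    using i assms by (simp add: scalar_prod_append col_block_def)
qed (simp add: col_block_def)

lemma mult_vec_append3:
  fixes A :: "'a::comm_semiring_0 mat"
  assumes "dim_col A = k1 + k2 + k3"
    and "v1 \<in> carrier_vec k1" "v2 \<in> carrier_vec k2" "v3 \<in> carrier_vec k3"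
  shows "A *\<^sub>v (v1 @\<^sub>v v2 @\<^sub>v v3) =
    col_block A 0 k1 *\<^sub>v v1 + col_block A k1 k2 *\<^sub>v v2 + col_block A (k1 + k2) k3 *\<^sub>v v3"
proof -
  have "A *\<^sub>v (v1 @\<^sub>v v2 @\<^sub>v v3) = col_block A 0 (k1 + (k2 + k3)) *\<^sub>v (v1 @\<^sub>v v2 @\<^sub>v v3)"
    using col_block_all[of A] assms(1) by (simp add: add.assoc)
  also have "\<dots> = col_block A 0 k1 *\<^sub>v v1 +
      (col_block A k1 k2 *\<^sub>v v2 + col_block A (k1 + k2) k3 *\<^sub>v v3)"
    using assms(2-4) by (simp add: col_block_mult_append)
  also have "\<dots> = col_block A 0 k1 *\<^sub>v v1 + col_block A k1 k2 *\<^sub>v v2 +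
      col_block A (k1 + k2) k3 *\<^sub>v v3"
    by (rule assoc_add_vec[where n = "dim_row A", symmetric]) simp_all
  finally show ?thesis .
qed

lemma mult_vec_append4:
  fixes A :: "'a::comm_semiring_0 mat"
  assumes "dim_col A = k1 + k2 + k3 + k4"
    and "v1 \<in> carrier_vec k1" "v2 \<in> carrier_vec k2" "v3 \<in> carrier_vec k3" "v4 \<in> carrier_vec k4"
  shows "A *\<^sub>v (v1 @\<^sub>v v2 @\<^sub>v v3 @\<^sub>v v4) = col_block A 0 k1 *\<^sub>v v1 + col_block A k1 k2 *\<^sub>v v2 +
    col_block A (k1 + k2) k3 *\<^sub>v v3 + col_block A (k1 + k2 + k3) k4 *\<^sub>v v4"
proof -
  have "A *\<^sub>v (v1 @\<^sub>v v2 @\<^sub>v v3 @\<^sub>v v4) = col_block A 0 k1 *\<^sub>v v1 + col_block A k1 k2 *\<^sub>v v2 +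
      col_block A (k1 + k2) (k3 + k4) *\<^sub>v (v3 @\<^sub>v v4)"
    by (rule mult_vec_append3) (use assms in \<open>simp_all add: add.assoc\<close>)
  also have "\<dots> = col_block A 0 k1 *\<^sub>v v1 + col_block A k1 k2 *\<^sub>v v2 +
      (col_block A (k1 + k2) k3 *\<^sub>v v3 + col_block A (k1 + k2 + k3) k4 *\<^sub>v v4)"
    using assms(4,5) by (subst col_block_mult_append) auto
  also have "\<dots> = col_block A 0 k1 *\<^sub>v v1 + col_block A k1 k2 *\<^sub>v v2 +
      col_block A (k1 + k2) k3 *\<^sub>v v3 + col_block A (k1 + k2 + k3) k4 *\<^sub>v v4"
    by (rule assoc_add_vec[where n = "dim_row A", symmetric]) simp_all
  finally show ?thesis .
qed

section \<open>Kernels of row submatrices\<close>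

lemma dim_submatrix_rows:
  assumes "I \<subseteq> {..<dim_row G}"
  shows "dim_row (submatrix G I UNIV) = card I" "dim_col (submatrix G I UNIV) = dim_col G"
proof -
  have "{i. i < dim_row G \<and> i \<in> I} = I" using assms by auto
  then show "dim_row (submatrix G I UNIV) = card I" by (simp add: dim_submatrix)
  show "dim_col (submatrix G I UNIV) = dim_col G" by (simp add: dim_submatrix)
qed

lemma row_submatrix_rows:
  assumes "I \<subseteq> {..<dim_row G}" "i < card I"
  shows "row (submatrix G I UNIV) i = row G (pick I i)"
proof -
  have "pick I i < dim_row G" using pick_in_set_le[OF assms(2)] assms(1) by auto
  then show ?thesis
    using assms submatrix_index[of i G I _ UNIV] dim_submatrix_rows[OF assms(1)]
    by (intro eq_vecI) (auto simp: dim_submatrix pick_UNIV)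
qed

lemma all_less_card_pick_iff:
  assumes "finite I"
  shows "(\<forall>i<card I. P (pick I i)) \<longleftrightarrow> (\<forall>i\<in>I. P i)"
proof
  assume all_pick: "\<forall>i<card I. P (pick I i)"
  show "\<forall>i\<in>I. P i"
  proof
    fix i assume i: "i \<in> I"
    have "card {a\<in>I. a < i} < card I"
      using i assms by (intro psubset_card_mono) auto
    then have "P (pick I (card {a\<in>I. a < i}))" using all_pick by blast
    then show "P i" unfolding pick_card_in_set[OF i] .
  qed
qed (use pick_in_set_le in blast)

lemma mat_kernel_submatrix_rows_iff:
  fixes G :: "'a::comm_ring_1 mat"
  assumes I: "I \<subseteq> {..<dim_row G}"
  shows "v \<in> mat_kernel (submatrix G I UNIV) \<longleftrightarrow>
    v \<in> carrier_vec (dim_col G) \<and> (\<forall>i\<in>I. (G *\<^sub>v v) $ i = 0)"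
proof -
  have "(submatrix G I UNIV *\<^sub>v v) $ i = row G (pick I i) \<bullet> v" if "i < card I" for i
    using that row_submatrix_rows[OF I] dim_submatrix_rows[OF I] by simp
  then have "submatrix G I UNIV *\<^sub>v v = 0\<^sub>v (card I) \<longleftrightarrow> (\<forall>i<card I. row G (pick I i) \<bullet> v = 0)"
    using dim_submatrix_rows[OF I] by (auto simp: vec_eq_iff)
  also have "\<dots> \<longleftrightarrow> (\<forall>i\<in>I. row G i \<bullet> v = 0)"
    using all_less_card_pick_iff[OF finite_subset[OF I]] by simp
  also have "\<dots> \<longleftrightarrow> (\<forall>i\<in>I. (G *\<^sub>v v) $ i = 0)"
    by (rule ball_cong) (use I in auto)
  finally show ?thesis
    using dim_submatrix_rows[OF I] unfolding mat_kernel_def by auto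
qed

section \<open>Divisibility chains\<close>

lemma dvd_chain_le:
  fixes a :: "nat \<Rightarrow> 'a::comm_monoid_mult"
  assumes chain: "\<And>i. Suc i < p \<Longrightarrow> a i dvd a (Suc i)" and "i \<le> j" "j < p"
  shows "a i dvd a j"
  using assms(2,3)
proof (induction j rule: dec_induct)
  case (step k)
  then show ?case using chain[of k] dvd_trans by auto
qed simp

lemma down_closed_eq_lessThan_card:
  fixes S :: "nat set"
  assumes "finite S" and down: "\<And>i j. j \<in> S \<Longrightarrow> i \<le> j \<Longrightarrow> i \<in> S"
  shows "S = {..<card S}"
proof (cases "S = {}")
  case False
  then have "S = {..Max S}"
    using down Max_in[OF assms(1) False] Max_ge[OF assms(1)] by blast
  then show ?thesis by (metis card_atMost lessThan_Suc_atMost)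
qed simp

lemma dvd_chain_units_eq_lessThan:
  fixes a :: "nat \<Rightarrow> 'a::comm_monoid_mult"
  assumes chain: "\<And>i. Suc i < p \<Longrightarrow> a i dvd a (Suc i)"
  shows "{j. j < p \<and> a j dvd 1} = {..<card {j. j < p \<and> a j dvd 1}}"
  by (rule down_closed_eq_lessThan_card)
    (auto intro: dvd_trans[OF dvd_chain_le[where a = a, OF chain]])

lemma bdry_mat_Suc_carrier: "bdry_mat sl (Suc d) \<in> carrier_mat (nsimp sl d) (nsimp sl (Suc d))"
  by (simp add: bdry_mat_def)

lemma boundaries_carrier: "b \<in> boundaries sl d \<Longrightarrow> b \<in> carrier_vec (nsimp sl d)"
  unfolding boundaries_def by (auto intro: mult_mat_vec_carrier[OF bdry_mat_Suc_carrier])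

lemma boundaries_add:
  assumes "b \<in> boundaries sl d" "b' \<in> boundaries sl d"
  shows "b + b' \<in> boundaries sl d"
  using assms mult_add_distrib_mat_vec[OF bdry_mat_Suc_carrier, symmetric]
  unfolding boundaries_def by fastforce

lemma boundaries_diff:
  assumes "b \<in> boundaries sl d" "b' \<in> boundaries sl d"
  shows "b - b' \<in> boundaries sl d"
  using assms mult_minus_distrib_mat_vec[OF bdry_mat_Suc_carrier, symmetric]
  unfolding boundaries_def by fastforce

lemma hclass_add_boundary:
  fixes h :: "'a::comm_ring_1 vec"
  assumes h: "h \<in> carrier_vec (nsimp sl d)" and b: "b \<in> boundaries sl d"
  shows "hclass sl d (h + b) = hclass sl d h"
  unfolding hclass_def
proof safe
  fix b' :: "'a vec" assume b': "b' \<in> boundaries sl d"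
  have "h + b + b' = h + (b + b')"
    using h b b' boundaries_carrier by (blast intro: assoc_add_vec)
  then show "\<exists>b''. h + b + b' = h + b'' \<and> b'' \<in> boundaries sl d"
    using boundaries_add[OF b b'] by blast
next
  fix b' :: "'a vec" assume b': "b' \<in> boundaries sl d"
  have "h + b' = h + b + (b' - b)"
    using h boundaries_carrier[OF b] boundaries_carrier[OF b'] by (intro eq_vecI) auto
  then show "\<exists>b''. h + b' = h + b + b'' \<and> b'' \<in> boundaries sl d"
    using boundaries_diff[OF b' b] by blast
qed

lemma Gmat_mult_append:
  assumes "dim_row (M d) = nsimp sl d" and "\<upsilon> \<in> carrier_vec (nU sl M d)"
    and "\<tau> \<in> carrier_vec (nT sl M d)" and "\<phi> \<in> carrier_vec (nF sl M d)"
  shows "Gmat sl M d *\<^sub>v (\<upsilon> @\<^sub>v \<tau> @\<^sub>v \<phi>) =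
    Ublk sl M d *\<^sub>v \<upsilon> + Tblk sl M d *\<^sub>v \<tau> + Fblk sl M d *\<^sub>v \<phi>"
proof -
  have "col_block (Gmat sl M d) 0 (nU sl M d) = Ublk sl M d"
    and "col_block (Gmat sl M d) (nU sl M d) (nT sl M d) = Tblk sl M d"
    and "col_block (Gmat sl M d) (nU sl M d + nT sl M d) (nF sl M d) = Fblk sl M d"
    unfolding Gmat_def col_block_def Ublk_def Tblk_def Fblk_def using assms(1)
    by (auto simp: ac_simps)
  then show ?thesis
    using mult_vec_append3[of "Gmat sl M d"] assms(2-4) by (simp add: Gmat_def)
qed

lemma Amat_mult_vec_index:
  assumes "\<tau> \<in> carrier_vec (nT sl M d)" "i < nT sl M d"
  shows "(Amat sl M d *\<^sub>v \<tau>) $ i = tors_coeff sl M d i * \<tau> $ i"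
  using mult_vec_index_shifted_diagonal[of "Amat sl M d" "nT sl M d" "nT sl M d" \<tau> i 0] assms
  by (simp add: Amat_def)

lemma UT_carrier: "Ublk sl M d *\<^sub>v \<upsilon> + Tblk sl M d *\<^sub>v \<tau> \<in> carrier_vec (dim_row (M d))"
  unfolding Ublk_def Tblk_def by simp

lemma UT_eq_UTF_zero:
  "Ublk sl M d *\<^sub>v \<upsilon> + Tblk sl M d *\<^sub>v \<tau> =
    Ublk sl M d *\<^sub>v \<upsilon> + Tblk sl M d *\<^sub>v \<tau> + Fblk sl M d *\<^sub>v 0\<^sub>v (nF sl M d)"
  using UT_carrier[of sl M d \<upsilon> \<tau>] unfolding Fblk_def col_block_mult_zero by simp

section \<open>Reduced bases\<close>

locale reduced_bases_ranks =
  fixes sl :: "nat \<Rightarrow> 'v::linorder set list" and M :: "nat \<Rightarrow> 'a::idom mat" and r :: "nat \<Rightarrow> nat"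
  assumes M_carrier: "\<And>d. M d \<in> carrier_mat (nsimp sl d) (nsimp sl d)"
    and M_invertible: "\<And>d. invertible_mat (M d)"
    and rank_sum_le: "\<And>d. r (Suc d) + r d \<le> nsimp sl d"
    and rank_le_dim_row: "\<And>d. r d \<le> dim_row (red_mat sl M d)"
    and red_mat_nonzero_iff: "\<And>d i j. i < dim_row (red_mat sl M d) \<Longrightarrow> j < dim_col (red_mat sl M d) \<Longrightarrow>
      red_mat sl M d $$ (i, j) \<noteq> 0 \<longleftrightarrow> i < r d \<and> j = r (Suc d) + i"
    and red_mat_diag_dvd: "\<And>d i. Suc i < r d \<Longrightarrow>
      red_mat sl M d $$ (i, r (Suc d) + i) dvd red_mat sl M d $$ (Suc i, r (Suc d) + Suc i)"

lemma reduced_bases_obtain_ranks: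
  assumes "reduced_bases sl M"
  obtains r where "reduced_bases_ranks sl M r"
  using assms unfolding reduced_bases_def reduced_bases_ranks_def by blast

context reduced_bases_ranks
begin

text \<open>The j-th diagonal entry of D'_{d+1}; D_{d+1} starts with r (Suc (Suc d)) zero columns.\<close>

definition elem_div :: "nat \<Rightarrow> nat \<Rightarrow> 'a" where
  "elem_div d j = red_mat sl M (Suc d) $$ (j, r (Suc (Suc d)) + j)"

lemma red_mat_Suc:
  "red_mat sl M (Suc d) \<in> carrier_mat (nsimp sl d) (nsimp sl (Suc d))"
  "M d * red_mat sl M (Suc d) = bdry_mat sl (Suc d) * M (Suc d)"
proof -
  obtain B where B: "B \<in> carrier_mat (nsimp sl d) (nsimp sl d)" "M d * B = 1\<^sub>m (nsimp sl d)"
    using invertible_mat_inverse_carrier[OF M_carrier M_invertible] by blast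
  have C: "bdry_mat sl (Suc d) * M (Suc d) \<in> carrier_mat (nsimp sl d) (nsimp sl (Suc d))"
    using bdry_mat_Suc_carrier M_carrier by (rule mult_carrier_mat)
  let ?X = "B * (bdry_mat sl (Suc d) * M (Suc d))"
  have "M d * ?X = (M d * B) * (bdry_mat sl (Suc d) * M (Suc d))"
    using assoc_mult_mat[OF M_carrier B(1) C] by simp
  also have "\<dots> = bdry_mat sl (Suc d) * M (Suc d)"
    using B(2) left_mult_one_mat[OF C] by simp
  finally have "?X \<in> carrier_mat (nsimp sl d) (nsimp sl (Suc d)) \<and>
      M d * ?X = bdry_mat sl (Suc d) * M (Suc d)"
    using mult_carrier_mat[OF B(1) C] by simp
  then have "\<exists>X. X \<in> carrier_mat (nsimp sl d) (nsimp sl (Suc d)) \<and>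
      M d * X = bdry_mat sl (Suc d) * M (Suc d)" ..
  from someI_ex[OF this]
  show "red_mat sl M (Suc d) \<in> carrier_mat (nsimp sl d) (nsimp sl (Suc d))"
    and "M d * red_mat sl M (Suc d) = bdry_mat sl (Suc d) * M (Suc d)"
    unfolding red_mat_def by auto
qed

lemma dim_col_red_mat [simp]: "dim_col (red_mat sl M d) = nsimp sl d"
  using red_mat_Suc(1)[of "d - 1"] by (cases d) (auto simp: red_mat_def)

lemma rank_zero [simp]: "r 0 = 0"
  using rank_le_dim_row[of 0] by (simp add: red_mat_def)

lemma elem_div_nonzero: "j < r (Suc d) \<Longrightarrow> elem_div d j \<noteq> 0"
  using red_mat_nonzero_iff[of j "Suc d"] rank_le_dim_row[of "Suc d"] rank_sum_le[of "Suc d"]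
  unfolding elem_div_def by auto

lemma elem_div_dvd: "i \<le> j \<Longrightarrow> j < r (Suc d) \<Longrightarrow> elem_div d i dvd elem_div d j"
  unfolding elem_div_def by (rule dvd_chain_le[where p = "r (Suc d)"]) (use red_mat_diag_dvd in auto)

lemma row_entries_nonzero:
  assumes "x \<in> row_entries sl M d j" "x \<noteq> 0" "j < nsimp sl d"
  shows "j < r (Suc d)" "x = elem_div d j"
  using assms red_mat_nonzero_iff[of j "Suc d"] red_mat_Suc(1)[of d]
  unfolding row_entries_def elem_div_def by auto

lemma elem_div_in_row_entries: "j < r (Suc d) \<Longrightarrow> elem_div d j \<in> row_entries sl M d j"
  using rank_sum_le[of "Suc d"] red_mat_Suc(1)[of d]
  unfolding row_entries_def elem_div_def by auto

lemma col_zero_iff: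
  assumes "j < nsimp sl d"
  shows "col_zero sl M d j \<longleftrightarrow> \<not> (r (Suc d) \<le> j \<and> j < r (Suc d) + r d)"
  unfolding col_zero_def
proof
  assume zero: "\<forall>i<dim_row (red_mat sl M d). red_mat sl M d $$ (i, j) = 0"
  show "\<not> (r (Suc d) \<le> j \<and> j < r (Suc d) + r d)"
  proof
    assume j: "r (Suc d) \<le> j \<and> j < r (Suc d) + r d"
    then have "j - r (Suc d) < r d" by linarith
    then have i: "j - r (Suc d) < dim_row (red_mat sl M d)"
      using rank_le_dim_row[of d] by linarith
    then have "red_mat sl M d $$ (j - r (Suc d), j) \<noteq> 0"
      using j assms red_mat_nonzero_iff[of "j - r (Suc d)" d j] \<open>j - r (Suc d) < r d\<close> by simp
    then show False using zero i by blast
  qed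
next
  assume "\<not> (r (Suc d) \<le> j \<and> j < r (Suc d) + r d)"
  then show "\<forall>i<dim_row (red_mat sl M d). red_mat sl M d $$ (i, j) = 0"
    using assms red_mat_nonzero_iff[of _ d j] by force
qed

lemma typeU_iff:
  assumes "j < nsimp sl d"
  shows "typeU sl M d j \<longleftrightarrow> j < r (Suc d) \<and> elem_div d j dvd 1"
proof
  assume "typeU sl M d j"
  then obtain x where "x \<in> row_entries sl M d j" "x dvd 1"
    unfolding typeU_def by blast
  moreover have "x \<noteq> 0" using \<open>x dvd 1\<close> by auto
  ultimately show "j < r (Suc d) \<and> elem_div d j dvd 1"
    using row_entries_nonzero assms by blast
next
  assume "j < r (Suc d) \<and> elem_div d j dvd 1"
  then show "typeU sl M d j"
    unfolding typeU_def using col_zero_iff[OF assms] elem_div_in_row_entries by auto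
qed

lemma typeT_iff:
  assumes "j < nsimp sl d"
  shows "typeT sl M d j \<longleftrightarrow> j < r (Suc d) \<and> \<not> elem_div d j dvd 1"
proof
  assume "typeT sl M d j"
  then obtain x where "x \<in> row_entries sl M d j" "x \<noteq> 0" "\<not> x dvd 1"
    unfolding typeT_def by blast
  then show "j < r (Suc d) \<and> \<not> elem_div d j dvd 1"
    using row_entries_nonzero assms by blast
next
  assume "j < r (Suc d) \<and> \<not> elem_div d j dvd 1"
  then show "typeT sl M d j"
    unfolding typeT_def using col_zero_iff[OF assms] elem_div_in_row_entries elem_div_nonzero
    by (auto intro!: bexI[of _ "elem_div d j"])
qed

lemma typeR_iff:
  "j < nsimp sl d \<Longrightarrow> typeR sl M d j \<longleftrightarrow> r (Suc d) \<le> j \<and> j < r (Suc d) + r d"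
  unfolding typeR_def using col_zero_iff by simp

lemma typeF_iff:
  assumes "j < nsimp sl d"
  shows "typeF sl M d j \<longleftrightarrow> r (Suc d) + r d \<le> j"
proof
  assume "typeF sl M d j"
  then have "col_zero sl M d j" "\<not> j < r (Suc d)"
    unfolding typeF_def using elem_div_in_row_entries elem_div_nonzero by blast+
  then show "r (Suc d) + r d \<le> j"
    using col_zero_iff[OF assms] by simp
next
  assume "r (Suc d) + r d \<le> j"
  then show "typeF sl M d j"
    unfolding typeF_def using col_zero_iff[OF assms] row_entries_nonzero(1)[OF _ _ assms]
    by fastforce
qed

lemma nU_eq_card_units: "nU sl M d = card {j. j < r (Suc d) \<and> elem_div d j dvd 1}"
proof -
  have "{j. j < nsimp sl d \<and> typeU sl M d j} = {j. j < r (Suc d) \<and> elem_div d j dvd 1}"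
    using typeU_iff rank_sum_le[of d] by fastforce
  then show ?thesis unfolding nU_def by simp
qed

lemma units_eq_lessThan_nU: "{j. j < r (Suc d) \<and> elem_div d j dvd 1} = {..<nU sl M d}"
  unfolding nU_eq_card_units
  by (rule dvd_chain_units_eq_lessThan) (simp add: elem_div_dvd)

lemma elem_div_unit_iff: "j < r (Suc d) \<Longrightarrow> elem_div d j dvd 1 \<longleftrightarrow> j < nU sl M d"
  using units_eq_lessThan_nU by blast

lemma nU_le_rank: "nU sl M d \<le> r (Suc d)"
proof -
  have "{j. j < r (Suc d) \<and> elem_div d j dvd 1} \<subseteq> {..<r (Suc d)}" by auto
  then show ?thesis
    unfolding nU_eq_card_units by (metis card_lessThan card_mono finite_lessThan)
qed

lemma block_sizes:
  "nU sl M d + nT sl M d = r (Suc d)"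
  "nR sl M d = r d"
  "nU sl M d + nT sl M d + nR sl M d + nF sl M d = nsimp sl d"
proof -
  have "{j. j < nsimp sl d \<and> typeT sl M d j} = {nU sl M d..<r (Suc d)}"
    using typeT_iff elem_div_unit_iff rank_sum_le[of d] by fastforce
  then show T: "nU sl M d + nT sl M d = r (Suc d)"
    unfolding nT_def using nU_le_rank by simp
  have "{j. j < nsimp sl d \<and> typeR sl M d j} = {r (Suc d)..<r (Suc d) + r d}"
    using typeR_iff rank_sum_le[of d] by fastforce
  then show R: "nR sl M d = r d"
    unfolding nR_def by simp
  have "{j. j < nsimp sl d \<and> typeF sl M d j} = {r (Suc d) + r d..<nsimp sl d}"
    using typeF_iff by fastforce
  then show "nU sl M d + nT sl M d + nR sl M d + nF sl M d = nsimp sl d"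
    unfolding nF_def using T R rank_sum_le[of d] by simp
qed

lemma tors_coeff_eq:
  assumes "i < nT sl M d"
  shows "tors_coeff sl M d i = elem_div d (nU sl M d + i)"
  unfolding tors_coeff_def
proof (rule some_equality)
  have "nU sl M d + i < r (Suc d)" using assms block_sizes(1)[of d] by simp
  then show "elem_div d (nU sl M d + i) \<in> row_entries sl M d (nU sl M d + i) \<and>
      elem_div d (nU sl M d + i) \<noteq> 0"
    using elem_div_in_row_entries elem_div_nonzero by blast
  fix x assume "x \<in> row_entries sl M d (nU sl M d + i) \<and> x \<noteq> 0"
  then show "x = elem_div d (nU sl M d + i)"
    using row_entries_nonzero(2) \<open>nU sl M d + i < r (Suc d)\<close> rank_sum_le[of d] by simp
qed

lemma cycle_iff_coords:
  assumes c: "c \<in> carrier_vec (nsimp sl d)"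
  shows "M d *\<^sub>v c \<in> cycles sl d \<longleftrightarrow> (\<forall>i<r d. c $ (r (Suc d) + i) = 0)"
proof (cases d)
  case 0
  then show ?thesis
    using c M_carrier[of 0] unfolding cycles_def by (auto simp: bdry_mat_def)
next
  case (Suc e)
  have D: "red_mat sl M d \<in> carrier_mat (nsimp sl e) (nsimp sl d)"
    using red_mat_Suc(1)[of e] Suc by simp
  have Dc: "red_mat sl M d *\<^sub>v c \<in> carrier_vec (nsimp sl e)"
    using D c by simp
  have "bdry_mat sl d *\<^sub>v (M d *\<^sub>v c) = (bdry_mat sl d * M d) *\<^sub>v c"
    using assoc_mult_mat_vec[OF bdry_mat_Suc_carrier[of sl e] M_carrier[of "Suc e"]] c Suc
    by simp
  also have "\<dots> = M e *\<^sub>v (red_mat sl M d *\<^sub>v c)"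
    using red_mat_Suc(2)[of e] assoc_mult_mat_vec[OF M_carrier D c] Suc by simp
  also have "M e *\<^sub>v (red_mat sl M d *\<^sub>v c) = 0\<^sub>v (nsimp sl e) \<longleftrightarrow>
      red_mat sl M d *\<^sub>v c = 0\<^sub>v (nsimp sl e)"
    using invertible_mat_mult_vec_inj[OF M_carrier M_invertible Dc, of "0\<^sub>v (nsimp sl e)"]
      mult_mat_vec_zero[of "M e"] M_carrier[of e] by auto
  also have "\<dots> \<longleftrightarrow> (\<forall>i<r d. c $ (r (Suc d) + i) = 0)"
    using rank_le_dim_row[of d] rank_sum_le[of d] red_mat_nonzero_iff[of _ d]
    by (intro mult_vec_shifted_diagonal_eq_zero_iff[OF D c]) (use D in auto)
  finally show ?thesis
    using c M_carrier[of d] Suc unfolding cycles_def by (simp add: bdry_mat_def)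
qed

lemma boundary_if_coords_divisible:
  assumes x: "x \<in> carrier_vec (nsimp sl d)"
    and zero: "\<And>j. r (Suc d) \<le> j \<Longrightarrow> j < nsimp sl d \<Longrightarrow> x $ j = 0"
    and dvd: "\<And>j. j < r (Suc d) \<Longrightarrow> elem_div d j dvd x $ j"
  shows "M d *\<^sub>v x \<in> boundaries sl d"
proof -
  have "\<forall>j. \<exists>k. j < r (Suc d) \<longrightarrow> x $ j = elem_div d j * k"
    using dvd unfolding dvd_def by blast
  from choice[OF this] obtain y where y: "\<And>j. j < r (Suc d) \<Longrightarrow> x $ j = elem_div d j * y j"
    by blast
  let ?s = "r (Suc (Suc d))" and ?D = "red_mat sl M (Suc d)"
  \<comment> \<open>place the quotient y j in the column of the j-th diagonal entry, so that D_{d+1} w = x\<close>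
  define w where "w = vec (nsimp sl (Suc d)) (\<lambda>t. if ?s \<le> t then y (t - ?s) else 0)"
  have w: "w \<in> carrier_vec (nsimp sl (Suc d))" unfolding w_def by simp
  have "?D *\<^sub>v w = x"
  proof (rule eq_vecI)
    fix j assume "j < dim_vec x"
    then have j: "j < nsimp sl d" using x by simp
    have Dj: "(?D *\<^sub>v w) $ j =
        (if ?s + j < nsimp sl (Suc d) then ?D $$ (j, ?s + j) * w $ (?s + j) else 0)"
      using red_mat_nonzero_iff[of j "Suc d"] red_mat_Suc(1)[of d] j
      by (intro mult_vec_index_shifted_diagonal[OF red_mat_Suc(1) w j]) auto
    show "(?D *\<^sub>v w) $ j = x $ j"
    proof (cases "j < r (Suc d)")
      case True
      then show ?thesis
        using Dj y rank_sum_le[of "Suc d"] unfolding w_def elem_div_def by simp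
    next
      case False
      then show ?thesis
        using Dj zero j red_mat_nonzero_iff[of j "Suc d" "?s + j"] red_mat_Suc(1)[of d] by auto
    qed
  qed (use x red_mat_Suc(1)[of d] in simp)
  then have "M d *\<^sub>v x = (M d * ?D) *\<^sub>v w"
    using assoc_mult_mat_vec[OF M_carrier red_mat_Suc(1) w] by simp
  also have "\<dots> = bdry_mat sl (Suc d) *\<^sub>v (M (Suc d) *\<^sub>v w)"
    using red_mat_Suc(2) assoc_mult_mat_vec[OF bdry_mat_Suc_carrier[of sl d] M_carrier[of "Suc d"] w]
    by simp
  finally have "M d *\<^sub>v x = bdry_mat sl (Suc d) *\<^sub>v (M (Suc d) *\<^sub>v w)" .
  moreover have "M (Suc d) *\<^sub>v w \<in> carrier_vec (nsimp sl (Suc d))"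
    using M_carrier w by (rule mult_mat_vec_carrier)
  ultimately show ?thesis
    unfolding boundaries_def by blast
qed

lemma UTF_eq_coords:
  assumes "\<upsilon> \<in> carrier_vec (nU sl M d)" "\<tau> \<in> carrier_vec (nT sl M d)" "\<phi> \<in> carrier_vec (nF sl M d)"
  shows "Ublk sl M d *\<^sub>v \<upsilon> + Tblk sl M d *\<^sub>v \<tau> + Fblk sl M d *\<^sub>v \<phi> =
    M d *\<^sub>v (\<upsilon> @\<^sub>v \<tau> @\<^sub>v 0\<^sub>v (nR sl M d) @\<^sub>v \<phi>)"
proof -
  have "M d *\<^sub>v (\<upsilon> @\<^sub>v \<tau> @\<^sub>v 0\<^sub>v (nR sl M d) @\<^sub>v \<phi>) =
      Ublk sl M d *\<^sub>v \<upsilon> + Tblk sl M d *\<^sub>v \<tau> + Rblk sl M d *\<^sub>v 0\<^sub>v (nR sl M d) + Fblk sl M d *\<^sub>v \<phi>"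
    unfolding Ublk_def Tblk_def Rblk_def Fblk_def
    using block_sizes(3)[of d] M_carrier[of d] assms by (intro mult_vec_append4) auto
  then show ?thesis
    using UT_carrier[of sl M d \<upsilon> \<tau>] unfolding Rblk_def col_block_mult_zero by simp
qed

lemma UTF_coords_carrier:
  assumes "\<upsilon> \<in> carrier_vec (nU sl M d)" "\<tau> \<in> carrier_vec (nT sl M d)" "\<phi> \<in> carrier_vec (nF sl M d)"
  shows "\<upsilon> @\<^sub>v \<tau> @\<^sub>v 0\<^sub>v (nR sl M d) @\<^sub>v \<phi> \<in> carrier_vec (nsimp sl d)"
proof -
  have "\<upsilon> @\<^sub>v \<tau> @\<^sub>v 0\<^sub>v (nR sl M d) @\<^sub>v \<phi> \<in>
      carrier_vec (nU sl M d + (nT sl M d + (nR sl M d + nF sl M d)))"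
    using assms by (intro append_carrier_vec zero_carrier_vec)
  then show ?thesis using block_sizes(3)[of d] by (simp add: add.assoc)
qed

lemma hom_iso_UTF:
  assumes "\<upsilon> \<in> carrier_vec (nU sl M d)" "\<tau> \<in> carrier_vec (nT sl M d)" "\<phi> \<in> carrier_vec (nF sl M d)"
  shows "hom_iso sl M d (Ublk sl M d *\<^sub>v \<upsilon> + Tblk sl M d *\<^sub>v \<tau> + Fblk sl M d *\<^sub>v \<phi>) =
    (vec (nT sl M d) (\<lambda>i. residue (tors_coeff sl M d i) (\<tau> $ i)), \<phi>)"
proof -
  let ?c = "\<upsilon> @\<^sub>v \<tau> @\<^sub>v 0\<^sub>v (nR sl M d) @\<^sub>v \<phi>"
  have "(SOME c. c \<in> carrier_vec (nsimp sl d) \<and>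
      M d *\<^sub>v c = Ublk sl M d *\<^sub>v \<upsilon> + Tblk sl M d *\<^sub>v \<tau> + Fblk sl M d *\<^sub>v \<phi>) = ?c"
    using UTF_coords_carrier[OF assms] UTF_eq_coords[OF assms]
      invertible_mat_mult_vec_inj[OF M_carrier M_invertible]
    by (intro some_equality) auto
  then have "hom_iso sl M d (Ublk sl M d *\<^sub>v \<upsilon> + Tblk sl M d *\<^sub>v \<tau> + Fblk sl M d *\<^sub>v \<phi>) =
      (vec (nT sl M d) (\<lambda>i. residue (tors_coeff sl M d i) (?c $ (nU sl M d + i))),
       vec (nF sl M d) (\<lambda>i. ?c $ (nU sl M d + nT sl M d + nR sl M d + i)))"
    unfolding hom_iso_def Let_def by simp
  moreover have "vec (nT sl M d) (\<lambda>i. residue (tors_coeff sl M d i) (?c $ (nU sl M d + i))) =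
      vec (nT sl M d) (\<lambda>i. residue (tors_coeff sl M d i) (\<tau> $ i))"
    using assms by (intro eq_vecI) auto
  moreover have "vec (nF sl M d) (\<lambda>i. ?c $ (nU sl M d + nT sl M d + nR sl M d + i)) = \<phi>"
    using assms by (intro eq_vecI) (auto simp: add.assoc)
  ultimately show ?thesis by simp
qed

lemma UTF_cycle:
  assumes "\<upsilon> \<in> carrier_vec (nU sl M d)" "\<tau> \<in> carrier_vec (nT sl M d)" "\<phi> \<in> carrier_vec (nF sl M d)"
  shows "Ublk sl M d *\<^sub>v \<upsilon> + Tblk sl M d *\<^sub>v \<tau> + Fblk sl M d *\<^sub>v \<phi> \<in> cycles sl d"
  unfolding UTF_eq_coords[OF assms] cycle_iff_coords[OF UTF_coords_carrier[OF assms]]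
  using assms block_sizes[of d] by (simp flip: add.assoc) linarith

lemma cycle_obtain_UTF:
  assumes z: "z \<in> cycles sl d"
  obtains \<upsilon> \<tau> \<phi> where "\<upsilon> \<in> carrier_vec (nU sl M d)" "\<tau> \<in> carrier_vec (nT sl M d)"
    "\<phi> \<in> carrier_vec (nF sl M d)" "z = Ublk sl M d *\<^sub>v \<upsilon> + Tblk sl M d *\<^sub>v \<tau> + Fblk sl M d *\<^sub>v \<phi>"
proof -
  obtain c where c: "c \<in> carrier_vec (nsimp sl d)" "M d *\<^sub>v c = z"
    using z invertible_mat_mult_vec_surj[OF M_carrier M_invertible] unfolding cycles_def by blast
  have R: "c $ j = 0" if "nU sl M d + nT sl M d \<le> j" "j < nU sl M d + nT sl M d + nR sl M d" for j
    using c z cycle_iff_coords[of c d] block_sizes[of d] that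
    by (metis add_diff_inverse_nat add_less_cancel_left not_le)
  define \<upsilon> where "\<upsilon> = vec (nU sl M d) (\<lambda>i. c $ i)"
  define \<tau> where "\<tau> = vec (nT sl M d) (\<lambda>i. c $ (nU sl M d + i))"
  define \<phi> where "\<phi> = vec (nF sl M d) (\<lambda>i. c $ (nU sl M d + nT sl M d + nR sl M d + i))"
  have "c = \<upsilon> @\<^sub>v \<tau> @\<^sub>v 0\<^sub>v (nR sl M d) @\<^sub>v \<phi>"
    using c block_sizes(3)[of d] R unfolding \<upsilon>_def \<tau>_def \<phi>_def
    by (intro eq_vecI) (auto simp: add.assoc)
  then show ?thesis
    using that[of \<upsilon> \<tau> \<phi>] c UTF_eq_coords unfolding \<upsilon>_def \<tau>_def \<phi>_def by simp
qed

lemma UTF_add: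
  assumes "\<upsilon> \<in> carrier_vec (nU sl M d)" "\<tau> \<in> carrier_vec (nT sl M d)" "\<phi> \<in> carrier_vec (nF sl M d)"
    and "\<upsilon>' \<in> carrier_vec (nU sl M d)" "\<tau>' \<in> carrier_vec (nT sl M d)" "\<phi>' \<in> carrier_vec (nF sl M d)"
  shows "(Ublk sl M d *\<^sub>v \<upsilon> + Tblk sl M d *\<^sub>v \<tau> + Fblk sl M d *\<^sub>v \<phi>) +
      (Ublk sl M d *\<^sub>v \<upsilon>' + Tblk sl M d *\<^sub>v \<tau>' + Fblk sl M d *\<^sub>v \<phi>') =
    Ublk sl M d *\<^sub>v (\<upsilon> + \<upsilon>') + Tblk sl M d *\<^sub>v (\<tau> + \<tau>') + Fblk sl M d *\<^sub>v (\<phi> + \<phi>')"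
proof -
  have "(\<upsilon> @\<^sub>v \<tau> @\<^sub>v 0\<^sub>v (nR sl M d) @\<^sub>v \<phi>) + (\<upsilon>' @\<^sub>v \<tau>' @\<^sub>v 0\<^sub>v (nR sl M d) @\<^sub>v \<phi>') =
      (\<upsilon> + \<upsilon>') @\<^sub>v (\<tau> + \<tau>') @\<^sub>v 0\<^sub>v (nR sl M d) @\<^sub>v (\<phi> + \<phi>')"
    using assms by (intro eq_vecI) auto
  then show ?thesis
    using assms UTF_eq_coords UTF_coords_carrier
      mult_add_distrib_mat_vec[OF M_carrier UTF_coords_carrier[OF assms(1-3)]
        UTF_coords_carrier[OF assms(4-6)]]
    by simp
qed

lemma cycle_add_UT_obtain_UTF:
  assumes h: "h \<in> cycles sl d"
    and \<upsilon>0: "\<upsilon>0 \<in> carrier_vec (nU sl M d)" and \<tau>0: "\<tau>0 \<in> carrier_vec (nT sl M d)"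
  obtains \<upsilon> \<tau> \<phi> where "\<upsilon> \<in> carrier_vec (nU sl M d)" "\<tau> \<in> carrier_vec (nT sl M d)"
    "\<phi> \<in> carrier_vec (nF sl M d)"
    "h + (Ublk sl M d *\<^sub>v \<upsilon>0 + Tblk sl M d *\<^sub>v \<tau>0) =
      Ublk sl M d *\<^sub>v \<upsilon> + Tblk sl M d *\<^sub>v \<tau> + Fblk sl M d *\<^sub>v \<phi>"
proof -
  obtain \<upsilon>h \<tau>h \<phi>h where \<upsilon>h: "\<upsilon>h \<in> carrier_vec (nU sl M d)" and \<tau>h: "\<tau>h \<in> carrier_vec (nT sl M d)"
    and \<phi>h: "\<phi>h \<in> carrier_vec (nF sl M d)"
    and h_eq: "h = Ublk sl M d *\<^sub>v \<upsilon>h + Tblk sl M d *\<^sub>v \<tau>h + Fblk sl M d *\<^sub>v \<phi>h"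
    using cycle_obtain_UTF[OF h] by blast
  have "h + (Ublk sl M d *\<^sub>v \<upsilon>0 + Tblk sl M d *\<^sub>v \<tau>0) =
      Ublk sl M d *\<^sub>v (\<upsilon>h + \<upsilon>0) + Tblk sl M d *\<^sub>v (\<tau>h + \<tau>0) + Fblk sl M d *\<^sub>v (\<phi>h + 0\<^sub>v (nF sl M d))"
    unfolding h_eq by (subst UT_eq_UTF_zero) (rule UTF_add[OF \<upsilon>h \<tau>h \<phi>h \<upsilon>0 \<tau>0 zero_carrier_vec])
  then show ?thesis
    using \<upsilon>h \<tau>h \<phi>h \<upsilon>0 \<tau>0 by (intro that[of "\<upsilon>h + \<upsilon>0" "\<tau>h + \<tau>0" \<phi>h]) auto
qed

lemma UT_boundary:
  assumes \<upsilon>: "\<upsilon> \<in> carrier_vec (nU sl M d)" and \<tau>: "\<tau> \<in> carrier_vec (nT sl M d)"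
  shows "Ublk sl M d *\<^sub>v \<upsilon> + Tblk sl M d *\<^sub>v (Amat sl M d *\<^sub>v \<tau>) \<in> boundaries sl d"
proof -
  let ?A\<tau> = "Amat sl M d *\<^sub>v \<tau>"
  let ?x = "\<upsilon> @\<^sub>v ?A\<tau> @\<^sub>v 0\<^sub>v (nR sl M d) @\<^sub>v 0\<^sub>v (nF sl M d)"
  have A\<tau>: "?A\<tau> \<in> carrier_vec (nT sl M d)" by (simp add: Amat_def carrier_vecI)
  have "Ublk sl M d *\<^sub>v \<upsilon> + Tblk sl M d *\<^sub>v ?A\<tau> = M d *\<^sub>v ?x"
    by (rule trans[OF UT_eq_UTF_zero UTF_eq_coords[OF \<upsilon> A\<tau> zero_carrier_vec]])
  also have "M d *\<^sub>v ?x \<in> boundaries sl d"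
  proof (rule boundary_if_coords_divisible)
    show "?x \<in> carrier_vec (nsimp sl d)"
      using UTF_coords_carrier[OF \<upsilon> A\<tau> zero_carrier_vec] .
    show "?x $ j = 0" if "r (Suc d) \<le> j" "j < nsimp sl d" for j
    proof -
      have "nU sl M d + nT sl M d \<le> j" "j < nU sl M d + (nT sl M d + (nR sl M d + nF sl M d))"
        using that block_sizes[of d] by linarith+
      then show ?thesis using carrier_vecD[OF \<upsilon>] carrier_vecD[OF A\<tau>] by simp
    qed
    show "elem_div d j dvd ?x $ j" if j: "j < r (Suc d)" for j
    proof (cases "j < nU sl M d")
      case True
      then show ?thesis using j elem_div_unit_iff \<upsilon> by (simp add: unit_imp_dvd)
    next
      case False
      then have "nU sl M d + (j - nU sl M d) = j" "j - nU sl M d < nT sl M d"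
        using j block_sizes(1)[of d] by auto
      then have "?x $ j = ?A\<tau> $ (j - nU sl M d)"
        using False carrier_vecD[OF \<upsilon>] carrier_vecD[OF A\<tau>] by simp
      also have "\<dots> = elem_div d j * \<tau> $ (j - nU sl M d)"
        using Amat_mult_vec_index[OF \<tau>] tors_coeff_eq \<open>j - nU sl M d < nT sl M d\<close>
          \<open>nU sl M d + (j - nU sl M d) = j\<close> by metis
      finally have "?x $ j = elem_div d j * \<tau> $ (j - nU sl M d)" .
      then show ?thesis by simp
    qed
  qed
  finally show ?thesis .
qed

lemma S_solvable_if_vanishing:
  assumes "I \<subseteq> {..<nsimp sl d}" "\<And>i. i \<in> I \<Longrightarrow> z $ i = 0"
  shows "S_solvable sl M d z I"
proof -
  have "Amat sl M d *\<^sub>v 0\<^sub>v (nT sl M d) = 0\<^sub>v (nT sl M d)"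
    using mult_mat_vec_zero[of "Amat sl M d"] by (simp add: Amat_def)
  then have "Ublk sl M d *\<^sub>v 0\<^sub>v (nU sl M d) + Tblk sl M d *\<^sub>v (Amat sl M d *\<^sub>v 0\<^sub>v (nT sl M d)) =
      0\<^sub>v (nsimp sl d)"
    using M_carrier[of d] unfolding Ublk_def Tblk_def by (simp add: col_block_mult_zero)
  then show ?thesis
    unfolding S_solvable_def using assms
    by (intro bexI[of _ "0\<^sub>v (nU sl M d)"] bexI[of _ "0\<^sub>v (nT sl M d)"]) auto
qed

lemma Gmat_kernel_iff:
  assumes I: "I \<subseteq> {..<nsimp sl d}" and "\<upsilon> \<in> carrier_vec (nU sl M d)"
    and "\<tau> \<in> carrier_vec (nT sl M d)" and "\<phi> \<in> carrier_vec (nF sl M d)"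
  shows "\<upsilon> @\<^sub>v \<tau> @\<^sub>v \<phi> \<in> mat_kernel (submatrix (Gmat sl M d) I UNIV) \<longleftrightarrow>
    (\<forall>i\<in>I. (Ublk sl M d *\<^sub>v \<upsilon> + Tblk sl M d *\<^sub>v \<tau> + Fblk sl M d *\<^sub>v \<phi>) $ i = 0)"
proof -
  have dims: "dim_row (Gmat sl M d) = nsimp sl d"
    "dim_col (Gmat sl M d) = nU sl M d + (nT sl M d + nF sl M d)"
    by (simp_all add: Gmat_def add.assoc)
  have "\<upsilon> @\<^sub>v \<tau> @\<^sub>v \<phi> \<in> carrier_vec (dim_col (Gmat sl M d))"
    unfolding dims(2) using assms(2-4) by (intro append_carrier_vec)
  then show ?thesis
    using mat_kernel_submatrix_rows_iff[of I "Gmat sl M d"] I dims(1)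
      Gmat_mult_append[of M d sl, OF _ assms(2-4)] M_carrier[of d]
    by simp
qed

lemma solvable_obtain_kernel_rep:
  assumes I: "I \<subseteq> {..<nsimp sl d}" and h: "h \<in> cycles sl d" and S: "S_solvable sl M d h I"
  obtains z \<upsilon> \<tau> \<phi> where "hclass sl d h = hclass sl d z" "z \<in> cycles sl d"
    "\<upsilon> \<in> carrier_vec (nU sl M d)" "\<tau> \<in> carrier_vec (nT sl M d)" "\<phi> \<in> carrier_vec (nF sl M d)"
    "z = Ublk sl M d *\<^sub>v \<upsilon> + Tblk sl M d *\<^sub>v \<tau> + Fblk sl M d *\<^sub>v \<phi>"
    "\<upsilon> @\<^sub>v \<tau> @\<^sub>v \<phi> \<in> mat_kernel (submatrix (Gmat sl M d) I UNIV)"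
proof -
  obtain \<upsilon>0 \<tau>0 where \<upsilon>0: "\<upsilon>0 \<in> carrier_vec (nU sl M d)" and \<tau>0: "\<tau>0 \<in> carrier_vec (nT sl M d)"
    and sol: "\<And>i. i \<in> I \<Longrightarrow>
      (Ublk sl M d *\<^sub>v \<upsilon>0 + Tblk sl M d *\<^sub>v (Amat sl M d *\<^sub>v \<tau>0)) $ i = - h $ i"
    using S unfolding S_solvable_def by blast
  let ?b = "Ublk sl M d *\<^sub>v \<upsilon>0 + Tblk sl M d *\<^sub>v (Amat sl M d *\<^sub>v \<tau>0)"
  have A\<tau>0: "Amat sl M d *\<^sub>v \<tau>0 \<in> carrier_vec (nT sl M d)"
    by (simp add: Amat_def carrier_vecI)
  obtain \<upsilon> \<tau> \<phi> where carriers: "\<upsilon> \<in> carrier_vec (nU sl M d)" "\<tau> \<in> carrier_vec (nT sl M d)"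
      "\<phi> \<in> carrier_vec (nF sl M d)"
    and z_eq: "h + ?b = Ublk sl M d *\<^sub>v \<upsilon> + Tblk sl M d *\<^sub>v \<tau> + Fblk sl M d *\<^sub>v \<phi>"
    using cycle_add_UT_obtain_UTF[OF h \<upsilon>0 A\<tau>0] by blast
  have h_carrier: "h \<in> carrier_vec (nsimp sl d)"
    using h unfolding cycles_def by simp
  have "(h + ?b) $ i = 0" if "i \<in> I" for i
  proof -
    have "?b \<in> carrier_vec (nsimp sl d)"
      using UT_carrier[of sl M d \<upsilon>0 "Amat sl M d *\<^sub>v \<tau>0"] M_carrier[of d] by simp
    moreover have "i < nsimp sl d"
      using that I by auto
    ultimately have "i < dim_vec ?b"
      by (simp only: carrier_vecD)
    then show ?thesis using sol[OF that] by simp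
  qed
  then have z_kernel: "\<upsilon> @\<^sub>v \<tau> @\<^sub>v \<phi> \<in> mat_kernel (submatrix (Gmat sl M d) I UNIV)"
    using Gmat_kernel_iff[OF I carriers] z_eq by simp
  have hclass_eq: "hclass sl d h = hclass sl d (h + ?b)"
    using hclass_add_boundary[OF h_carrier UT_boundary[OF \<upsilon>0 \<tau>0]] by simp
  have z_cycle: "h + ?b \<in> cycles sl d"
    unfolding z_eq by (rule UTF_cycle[OF carriers])
  show ?thesis
    by (rule that[OF hclass_eq z_cycle carriers z_eq z_kernel])
qed

lemma solvable_classes_eq_kernel_classes:
  assumes I: "I \<subseteq> {..<nsimp sl d}"
  shows "{hclass sl d h | h. h \<in> cycles sl d \<and> S_solvable sl M d h I} =
    {hclass sl d z | z \<upsilon> \<tau> \<phi>. z \<in> cycles sl d \<and>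
      \<upsilon> \<in> carrier_vec (nU sl M d) \<and> \<tau> \<in> carrier_vec (nT sl M d) \<and> \<phi> \<in> carrier_vec (nF sl M d) \<and>
      z = Ublk sl M d *\<^sub>v \<upsilon> + Tblk sl M d *\<^sub>v \<tau> + Fblk sl M d *\<^sub>v \<phi> \<and>
      \<upsilon> @\<^sub>v \<tau> @\<^sub>v \<phi> \<in> mat_kernel (submatrix (Gmat sl M d) I UNIV)}"
    (is "?L = ?R")
proof
  show "?L \<subseteq> ?R"
  proof
    fix X assume "X \<in> ?L"
    then obtain h where h: "h \<in> cycles sl d" "S_solvable sl M d h I" and X: "X = hclass sl d h"
      by blast
    obtain z \<upsilon> \<tau> \<phi> where "hclass sl d h = hclass sl d z" "z \<in> cycles sl d"
      "\<upsilon> \<in> carrier_vec (nU sl M d)" "\<tau> \<in> carrier_vec (nT sl M d)" "\<phi> \<in> carrier_vec (nF sl M d)"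
      "z = Ublk sl M d *\<^sub>v \<upsilon> + Tblk sl M d *\<^sub>v \<tau> + Fblk sl M d *\<^sub>v \<phi>"
      "\<upsilon> @\<^sub>v \<tau> @\<^sub>v \<phi> \<in> mat_kernel (submatrix (Gmat sl M d) I UNIV)"
      using solvable_obtain_kernel_rep[OF I h] .
    then show "X \<in> ?R" unfolding X by blast
  qed
  show "?R \<subseteq> ?L"
  proof
    fix X assume "X \<in> ?R"
    then obtain z \<upsilon> \<tau> \<phi> where X: "X = hclass sl d z" and z: "z \<in> cycles sl d"
      and carriers: "\<upsilon> \<in> carrier_vec (nU sl M d)" "\<tau> \<in> carrier_vec (nT sl M d)"
        "\<phi> \<in> carrier_vec (nF sl M d)"
      and z_eq: "z = Ublk sl M d *\<^sub>v \<upsilon> + Tblk sl M d *\<^sub>v \<tau> + Fblk sl M d *\<^sub>v \<phi>"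
      and kernel: "\<upsilon> @\<^sub>v \<tau> @\<^sub>v \<phi> \<in> mat_kernel (submatrix (Gmat sl M d) I UNIV)"
      by blast
    have "S_solvable sl M d z I"
      using S_solvable_if_vanishing[OF I] Gmat_kernel_iff[OF I carriers] kernel z_eq by simp
    then show "X \<in> ?L" unfolding X using z by blast
  qed
qed

end

theorem mainTheorem17:
  fixes K :: "'v::linorder set set"
    and \<mu> :: "'v set \<Rightarrow> 'l::complete_distrib_lattice"
    and sl :: "nat \<Rightarrow> 'v set list"
    and M :: "nat \<Rightarrow> 'a::idom mat"
    and d :: nat and l :: 'l
  assumes "is_PID TYPE('a)"
    and "simplicial_complex K"
    and "fuzzy_subcomplex K \<mu>"
    and "enumeration K sl"
    and "reduced_bases sl M"
  shows "Hlevel sl M \<mu> d l =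
           {hclass sl d z | z \<upsilon> \<tau> \<phi>. z \<in> cycles sl d \<and>
              \<upsilon> \<in> carrier_vec (nU sl M d) \<and> \<tau> \<in> carrier_vec (nT sl M d) \<and> \<phi> \<in> carrier_vec (nF sl M d) \<and>
              z = Ublk sl M d *\<^sub>v \<upsilon> + Tblk sl M d *\<^sub>v \<tau> + Fblk sl M d *\<^sub>v \<phi> \<and>
              (\<upsilon> @\<^sub>v \<tau> @\<^sub>v \<phi>) \<in> mat_kernel (submatrix (Gmat sl M d) (Iset sl \<mu> d l) UNIV)}
       \<and> (\<forall>z \<upsilon> \<tau> \<phi>. z \<in> cycles sl d \<and>
              \<upsilon> \<in> carrier_vec (nU sl M d) \<and> \<tau> \<in> carrier_vec (nT sl M d) \<and> \<phi> \<in> carrier_vec (nF sl M d) \<and>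
              z = Ublk sl M d *\<^sub>v \<upsilon> + Tblk sl M d *\<^sub>v \<tau> + Fblk sl M d *\<^sub>v \<phi> \<longrightarrow>
              hom_iso sl M d z = (vec (nT sl M d) (\<lambda>i. residue (tors_coeff sl M d i) (\<tau> $ i)), \<phi>))"
proof -
  \<comment> \<open>only reduced_bases is needed\<close>
  obtain r where "reduced_bases_ranks sl M r"
    using reduced_bases_obtain_ranks[OF assms(5)] .
  then interpret reduced_bases_ranks sl M r .
  have I: "Iset sl \<mu> d l \<subseteq> {..<nsimp sl d}"
    unfolding Iset_def by auto
  have "Hlevel sl M \<mu> d l = {hclass sl d h | h. h \<in> cycles sl d \<and> S_solvable sl M d h (Iset sl \<mu> d l)}"
    unfolding Hlevel_def homology_def by auto
  then show ?thesis
    using solvable_classes_eq_kernel_classes[OF I] hom_iso_UTF by simp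
qed

end
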